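(* For every $\tau\in[0,\tfrac1{3\sqrt3}]$ the function $t\mapsto e^{2t}y_\tau(t)$ is increasing on $[0,p_\tau]$; consequently $y_\tau(t)\ge\tfrac23e^{-2t}$ on $[0,p_\tau]$, and $|\dot y_\tau|<2y_\tau$ there.
   Context: $y_\tau$ solves $\ddot y=-2y(3y-2)$, $y(0)=y_{\max}$, $\dot y(0)=0$, with $y_{\max}$ the largest root of $y^3-y^2+4\tau^2$ (so $y_{\max}\ge\tfrac23$); $p_\tau$ is its half-period (the first positive time where $y_\tau$ attains its minimum; for $\tau=0$, $y_0=\operatorname{sech}^2t$ and $p_0=\infty$). *)

theory Defs
  imports "HOL-Analysis.Analysis"
begin

definition ymax :: "real \<Rightarrow> real" where
  "ymax \<tau> = Max {Y::real. Y ^ 3 - Y ^ 2 + 4 * \<tau> ^ 2 = 0}"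

definition is_y_tau :: "real \<Rightarrow> (real \<Rightarrow> real) \<Rightarrow> bool" where
  "is_y_tau \<tau> y \<longleftrightarrow>
     (\<forall>t. (y has_real_derivative deriv y t) (at t)) \<and>
     (\<forall>t. (deriv y has_real_derivative (- 2 * y t * (3 * y t - 2))) (at t)) \<and>
     y 0 = ymax \<tau> \<and> deriv y 0 = 0"

definition half_period :: "(real \<Rightarrow> real) \<Rightarrow> ereal" where
  "half_period y =
     (let S = {t::real. 0 < t \<and> y t = (INF s. y s)}
      in if S = {} then \<infinity> else ereal (Inf S))"

end

theory Submission
  imports Defs "HOL-Computational_Algebra.Polynomial"
begin

text \<open>Along the solution the energy  y'^2 + 4 y^3 - 4 y^2  is conserved; at t = 0 it equals
  -16 tau^2 because ymax is a root of the cubic.  Hence  y'^2 \<le> 4 y^2 (1 - y) \<le> 4 y^2  wherever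
  y \<ge> 0, strictly when y > 0, so  (e^{2t} y)' = e^{2t} (2 y + y')  is positive as long as y is.
  Before a first zero of y the function e^{2t} y would be nondecreasing, so it could not drop from
  ymax > 0 to 0: y stays positive on [0, \<infinity>).  All three claims therefore hold on the whole
  half-line.\<close>

lemma ymax_cubic_root:
  fixes \<tau> :: real
  assumes "27 * \<tau>\<^sup>2 \<le> 1"
  shows "ymax \<tau> ^ 3 - ymax \<tau> ^ 2 + 4 * \<tau>\<^sup>2 = 0" and "2 / 3 \<le> ymax \<tau>"
proof -
  let ?roots = "{Y::real. Y ^ 3 - Y ^ 2 + 4 * \<tau>\<^sup>2 = 0}"
  have "?roots = {Y. poly [:4 * \<tau>\<^sup>2, 0, -1, 1:] Y = 0}"
    by (auto simp: algebra_simps power2_eq_square power3_eq_cube)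
  also have "finite \<dots>"
    by (rule poly_roots_finite) simp
  finally have finite: "finite ?roots" .
  have "\<exists>Y\<ge>2/3. Y \<le> 1 \<and> Y ^ 3 - Y ^ 2 + 4 * \<tau>\<^sup>2 = 0"
    using assms by (intro IVT') (auto intro!: continuous_intros simp: power2_eq_square power3_eq_cube)
  then obtain r where "2 / 3 \<le> r" "r \<in> ?roots"
    by auto
  then have "ymax \<tau> \<in> ?roots" "r \<le> ymax \<tau>"
    unfolding ymax_def using Max_in[OF finite] Max_ge[OF finite] by blast+
  then show "ymax \<tau> ^ 3 - ymax \<tau> ^ 2 + 4 * \<tau>\<^sup>2 = 0" and "2 / 3 \<le> ymax \<tau>"
    using \<open>2 / 3 \<le> r\<close> by auto
qed

lemma is_y_tau_energy:
  assumes "is_y_tau \<tau> y" and "ymax \<tau> ^ 3 - ymax \<tau> ^ 2 + 4 * \<tau>\<^sup>2 = 0"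
  shows "(deriv y t)\<^sup>2 = 4 * (y t)\<^sup>2 - 4 * y t ^ 3 - 16 * \<tau>\<^sup>2"
proof -
  define E where "E t = (deriv y t)\<^sup>2 - 4 * (y t)\<^sup>2 + 4 * y t ^ 3" for t
  have "\<forall>s. (E has_real_derivative 0) (at s)"
    using assms(1) unfolding is_y_tau_def E_def
    by (auto intro!: derivative_eq_intros simp: algebra_simps power2_eq_square power3_eq_cube)
  then have "E t = E 0"
    by (rule DERIV_isconst_all)
  with assms show ?thesis
    unfolding E_def is_y_tau_def by (simp add: algebra_simps)
qed

lemma is_y_tau_abs_deriv_less:
  assumes "is_y_tau \<tau> y" and "ymax \<tau> ^ 3 - ymax \<tau> ^ 2 + 4 * \<tau>\<^sup>2 = 0" and "0 < y t"
  shows "\<bar>deriv y t\<bar> < 2 * y t"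
proof -
  have "0 < y t ^ 3" "0 \<le> \<tau>\<^sup>2"
    using \<open>0 < y t\<close> by simp_all
  then have "(deriv y t)\<^sup>2 < 4 * (y t)\<^sup>2"
    using is_y_tau_energy[OF assms(1,2), of t] by linarith
  then have "\<bar>deriv y t\<bar>\<^sup>2 < (2 * y t)\<^sup>2"
    by (simp add: power_mult_distrib)
  then show ?thesis
    by (rule power_less_imp_less_base) (use \<open>0 < y t\<close> in simp)
qed

lemma exp_mult_strict_mono_on:
  fixes y y' :: "real \<Rightarrow> real" and c :: real
  assumes "\<And>t. (y has_real_derivative y' t) (at t)"
    and "\<And>t. t \<in> I \<Longrightarrow> - c * y t < y' t" and "is_interval I"
  shows "strict_mono_on I (\<lambda>t. exp (c * t) * y t)"
proof (rule strict_mono_onI)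
  fix a b assume "a \<in> I" "b \<in> I" "a < b"
  show "exp (c * a) * y a < exp (c * b) * y b"
  proof (rule DERIV_pos_imp_increasing[OF \<open>a < b\<close>])
    fix t assume "a \<le> t" "t \<le> b"
    with \<open>a \<in> I\<close> \<open>b \<in> I\<close> \<open>is_interval I\<close> have "t \<in> I"
      by (meson mem_is_interval_1_I)
    have "((\<lambda>t. exp (c * t) * y t) has_real_derivative exp (c * t) * (c * y t + y' t)) (at t)"
      by (auto intro!: derivative_eq_intros assms(1) simp: algebra_simps)
    moreover have "0 < exp (c * t) * (c * y t + y' t)"
      using assms(2)[OF \<open>t \<in> I\<close>] by simp
    ultimately show "\<exists>D. ((\<lambda>t. exp (c * t) * y t) has_real_derivative D) (at t) \<and> 0 < D"
      by blast
  qed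
qed

lemma pos_of_deriv_ge_neg_mult:
  fixes y y' :: "real \<Rightarrow> real" and c :: real
  assumes deriv: "\<And>t. (y has_real_derivative y' t) (at t)"
    and lower: "\<And>t. 0 < y t \<Longrightarrow> - c * y t \<le> y' t"
    and "0 < y 0" and "0 \<le> t"
  shows "0 < y t"
proof (rule ccontr)
  assume "\<not> 0 < y t"
  define S where "S = {s. 0 \<le> s} \<inter> {s. y s \<le> 0}"
  have "continuous_on UNIV y"
    using deriv by (meson DERIV_isCont continuous_at_imp_continuous_on)
  then have "closed S"
    unfolding S_def by (intro closed_Int closed_Collect_le continuous_intros)
  moreover have "S \<noteq> {}" "bdd_below S"
    using \<open>0 \<le> t\<close> \<open>\<not> 0 < y t\<close> unfolding S_def by (auto intro: bdd_belowI[of _ 0])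
  ultimately have "Inf S \<in> S"
    by (rule closed_contains_Inf[rotated -1])
  define t0 where "t0 = Inf S"
  have "0 \<le> t0" "y t0 \<le> 0"
    using \<open>Inf S \<in> S\<close> unfolding t0_def S_def by auto
  have before_t0: "0 < y s" if "0 \<le> s" "s < t0" for s
    using that cInf_lower[OF _ \<open>bdd_below S\<close>, of s] unfolding t0_def S_def by force
  have "0 < t0"
    using \<open>0 \<le> t0\<close> \<open>y t0 \<le> 0\<close> \<open>0 < y 0\<close> by (cases "t0 = 0") auto
  define g where "g s = exp (c * s) * y s" for s
  have "(g has_real_derivative exp (c * s) * (c * y s + y' s)) (at s)" for s
    unfolding g_def by (auto intro!: derivative_eq_intros deriv simp: algebra_simps)
  then obtain z where "0 < z" "z < t0" and mvt: "g t0 - g 0 = t0 * (exp (c * z) * (c * y z + y' z))"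
    using MVT2[of 0 t0 g] \<open>0 < t0\<close> by force
  then have "0 < y z"
    by (intro before_t0) auto
  then have "0 \<le> t0 * (exp (c * z) * (c * y z + y' z))"
    using lower[of z] \<open>0 < t0\<close> by simp
  then have "g 0 \<le> g t0"
    using mvt by simp
  moreover have "0 < g 0" "g t0 \<le> 0"
    using \<open>0 < y 0\<close> \<open>y t0 \<le> 0\<close> unfolding g_def by (auto simp: mult_nonneg_nonpos)
  ultimately show False
    by simp
qed

theorem mainTheorem9:
  fixes \<tau> :: real and y :: "real \<Rightarrow> real"
  assumes "0 \<le> \<tau>" and "\<tau> \<le> 1 / (3 * sqrt 3)"
    and "is_y_tau \<tau> y"
  shows "strict_mono_on {t. 0 \<le> t \<and> ereal t \<le> half_period y} (\<lambda>t. exp (2 * t) * y t)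
         \<and> (\<forall>t. 0 \<le> t \<and> ereal t \<le> half_period y \<longrightarrow>
               y t \<ge> 2 / 3 * exp (- 2 * t) \<and> \<bar>deriv y t\<bar> < 2 * y t)"
proof -
  have "\<tau> * (3 * sqrt 3) \<le> 1"
    using assms(2) by (simp add: field_simps)
  then have "(\<tau> * (3 * sqrt 3))\<^sup>2 \<le> 1"
    using assms(1) by (simp add: power_le_one)
  then have "27 * \<tau>\<^sup>2 \<le> 1"
    by (simp add: power_mult_distrib)
  note ymax = ymax_cubic_root[OF this]
  have dy: "\<And>t. (y has_real_derivative deriv y t) (at t)" and y0: "y 0 = ymax \<tau>"
    using assms(3) unfolding is_y_tau_def by auto
  have pos: "0 < y t" if "0 \<le> t" for t
    using pos_of_deriv_ge_neg_mult[OF dy _ _ that, of 2] is_y_tau_abs_deriv_less[OF assms(3) ymax(1)]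
      y0 ymax(2) by fastforce
  have slope: "\<bar>deriv y t\<bar> < 2 * y t" if "0 \<le> t" for t
    using is_y_tau_abs_deriv_less[OF assms(3) ymax(1) pos[OF that]] .
  have mono: "strict_mono_on {0..} (\<lambda>t. exp (2 * t) * y t)"
  proof (rule exp_mult_strict_mono_on[OF dy])
    show "- 2 * y t < deriv y t" if "t \<in> {0..}" for t
      using slope[of t] that by auto
  qed (rule is_interval_ci)
  have lower: "2 / 3 * exp (- 2 * t) \<le> y t" if "0 \<le> t" for t
  proof -
    have "2 / 3 \<le> exp (2 * t) * y t"
      using strict_mono_onD[OF mono, of 0 t] that y0 ymax(2) by (cases "t = 0") auto
    then show ?thesis
      by (simp add: exp_minus field_simps)
  qed
  have "strict_mono_on {t. 0 \<le> t \<and> ereal t \<le> half_period y} (\<lambda>t. exp (2 * t) * y t)"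
    by (rule monotone_on_subset[OF mono]) auto
  with slope lower show ?thesis
    by auto
qed

end
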